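(* There is an absolute constant $c>0$ such that the following holds. Let $n_1,n_2,n_3\in\mathbb{Z}\setminus\{0\}$ with $|n_1|\ge|n_2|\ge|n_3|$ and set $n=n_1+n_2+n_3$. Then at least one of the following is true: (I) (resonance) $n_i=n$ for some $1\le i\le3$; (II) $|n_3|\ge c|n_1|$; (III) $|\Phi_3(n_1,n_2,n_3)|=|n^5-n_1^5-n_2^5-n_3^5|\ge c\,n_1^4$.
   Context: $\Phi_3(n_1,n_2,n_3)=n^5-n_1^5-n_2^5-n_3^5$ where $n=n_1+n_2+n_3$. The paper writes the alternatives with $\gtrsim$, meaning inequalities up to an absolute implicit constant. *)

theory Defs
  imports Complex_Main
begin

definition Phi3 :: "int \<Rightarrow> int \<Rightarrow> int \<Rightarrow> int" where
  "Phi3 n1 n2 n3 = (n1 + n2 + n3) ^ 5 - n1 ^ 5 - n2 ^ 5 - n3 ^ 5"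

end

theory Submission
  imports Defs
begin

text \<open>Phi_3 factors as 5 (n1+n2)(n2+n3)(n3+n1) Q with 2Q = n1^2 + n2^2 + n3^2 + n^2 \<ge> n1^2,
  and a pairwise sum n_i + n_j vanishes exactly in the resonant case n_k = n. If moreover
  4|n3| < |n1|, then |n3+n1| > |n1|/2 and one of |n1+n2|, |n2+n3| is at least |n1|/4, while the
  remaining factor is a nonzero integer; so |Phi_3| \<ge> 5 n1^4/16.\<close>

lemma Phi3_factorization:
  "Phi3 a b c = 5 * ((a + b) * (b + c) * (c + a)) * (a\<^sup>2 + b\<^sup>2 + c\<^sup>2 + a*b + b*c + c*a)"
  unfolding Phi3_def by algebra

lemma square_le_twice_Phi3_quadratic_factor:
  fixes a b c :: "'a::linordered_idom"
  shows "a\<^sup>2 \<le> 2 * (a\<^sup>2 + b\<^sup>2 + c\<^sup>2 + a*b + b*c + c*a)"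
proof -
  have "2 * (a\<^sup>2 + b\<^sup>2 + c\<^sup>2 + a*b + b*c + c*a) = a\<^sup>2 + (b\<^sup>2 + c\<^sup>2 + (a + b + c)\<^sup>2)"
    by algebra
  moreover have "0 \<le> b\<^sup>2 + c\<^sup>2 + (a + b + c)\<^sup>2"
    by simp
  ultimately show ?thesis
    by linarith
qed

lemma abs_le_abs_mult_nonzero_int:
  fixes x y :: int
  assumes "y \<noteq> 0"
  shows "\<bar>x\<bar> \<le> \<bar>x * y\<bar>"
proof -
  have "1 \<le> \<bar>y\<bar>" using assms by linarith
  then show ?thesis by (simp add: abs_mult mult_le_cancel_left1)
qed

lemma square_le_pairwise_sums_product:
  fixes a b c :: int
  assumes "\<bar>b\<bar> \<le> \<bar>a\<bar>" and "4 * \<bar>c\<bar> < \<bar>a\<bar>"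
    and "a + b \<noteq> 0" and "b + c \<noteq> 0"
  shows "a\<^sup>2 \<le> 8 * \<bar>(a + b) * (b + c) * (c + a)\<bar>"
proof -
  have "\<bar>a\<bar> \<le> 4 * \<bar>a + b\<bar> \<or> \<bar>a\<bar> \<le> 4 * \<bar>b + c\<bar>"
    using assms(1,2) by (smt (verit))
  moreover have "\<bar>a + b\<bar> \<le> \<bar>(a + b) * (b + c)\<bar>" "\<bar>b + c\<bar> \<le> \<bar>(b + c) * (a + b)\<bar>"
    using assms(3,4) by (simp_all add: abs_le_abs_mult_nonzero_int)
  ultimately have xy: "\<bar>a\<bar> \<le> 4 * \<bar>(a + b) * (b + c)\<bar>"
    by (auto simp: mult.commute)
  have z: "\<bar>a\<bar> \<le> 2 * \<bar>c + a\<bar>"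
    using assms(2) by (smt (verit))
  have "a\<^sup>2 = \<bar>a\<bar> * \<bar>a\<bar>"
    by (simp add: power2_eq_square)
  also have "\<dots> \<le> (4 * \<bar>(a + b) * (b + c)\<bar>) * (2 * \<bar>c + a\<bar>)"
    using xy z by (intro mult_mono) auto
  finally show ?thesis
    by (simp add: abs_mult)
qed

lemma Phi3_lower_bound:
  fixes a b c :: int
  assumes "\<bar>b\<bar> \<le> \<bar>a\<bar>" and "4 * \<bar>c\<bar> < \<bar>a\<bar>"
    and "a + b \<noteq> 0" and "b + c \<noteq> 0"
  shows "a ^ 4 \<le> 4 * \<bar>Phi3 a b c\<bar>"
proof -
  define Q where "Q = a\<^sup>2 + b\<^sup>2 + c\<^sup>2 + a*b + b*c + c*a"
  have Q: "a\<^sup>2 \<le> 2 * Q"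
    unfolding Q_def by (rule square_le_twice_Phi3_quadratic_factor)
  then have "Q \<ge> 0"
    using zero_le_power2[of a] by linarith
  have "a ^ 4 = a\<^sup>2 * a\<^sup>2"
    by algebra
  also have "\<dots> \<le> (8 * \<bar>(a + b) * (b + c) * (c + a)\<bar>) * (2 * Q)"
    using square_le_pairwise_sums_product[OF assms] Q by (intro mult_mono) auto
  also have "\<dots> \<le> 4 * \<bar>Phi3 a b c\<bar>"
    using \<open>Q \<ge> 0\<close> by (simp add: Phi3_factorization Q_def[symmetric] abs_mult)
  finally show ?thesis .
qed

theorem proposition3p1:
  "\<exists>c::real. c > 0 \<and>
     (\<forall>n1 n2 n3 :: int. n1 \<noteq> 0 \<longrightarrow> n2 \<noteq> 0 \<longrightarrow> n3 \<noteq> 0 \<longrightarrow>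
        \<bar>n1\<bar> \<ge> \<bar>n2\<bar> \<longrightarrow> \<bar>n2\<bar> \<ge> \<bar>n3\<bar> \<longrightarrow>
        (let n = n1 + n2 + n3 in
           (n1 = n \<or> n2 = n \<or> n3 = n)
         \<or> real_of_int \<bar>n3\<bar> \<ge> c * real_of_int \<bar>n1\<bar>
         \<or> real_of_int \<bar>Phi3 n1 n2 n3\<bar> \<ge> c * real_of_int n1 ^ 4))"
proof (intro exI[of _ "1/4"] conjI allI impI)
  fix n1 n2 n3 :: int
  assume "\<bar>n1\<bar> \<ge> \<bar>n2\<bar>"
  consider "n2 + n3 = 0 \<or> n1 + n2 = 0" | "4 * \<bar>n3\<bar> \<ge> \<bar>n1\<bar>"
    | "n1 ^ 4 \<le> 4 * \<bar>Phi3 n1 n2 n3\<bar>"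
    using Phi3_lower_bound[OF \<open>\<bar>n1\<bar> \<ge> \<bar>n2\<bar>\<close>, of n3] by (meson not_less)
  then show "let n = n1 + n2 + n3 in
           (n1 = n \<or> n2 = n \<or> n3 = n)
         \<or> real_of_int \<bar>n3\<bar> \<ge> 1/4 * real_of_int \<bar>n1\<bar>
         \<or> real_of_int \<bar>Phi3 n1 n2 n3\<bar> \<ge> 1/4 * real_of_int n1 ^ 4"
  proof cases
    case 1
    then show ?thesis by (auto simp: Let_def)
  next
    case 2
    then have "real_of_int \<bar>n3\<bar> \<ge> 1/4 * real_of_int \<bar>n1\<bar>" by linarith
    then show ?thesis by (simp add: Let_def)
  next
    case 3
    then have "real_of_int (n1 ^ 4) \<le> real_of_int (4 * \<bar>Phi3 n1 n2 n3\<bar>)"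
      by linarith
    then show ?thesis by (simp add: Let_def)
  qed
qed simp

end
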